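(* For integers $s,t\ge0$ let $m_{i,j}^{s,t}=\int_{(0,1)^2}\frac{x^{s+i}y^{s+j}}{x+y}\left(\frac{1-x}{1+x}\right)^t\left(\frac{1-y}{1+y}\right)^tdx\,dy$, $\tau_n^{s,t}=\det(m_{i,j}^{s,t})_{i,j=0}^{n-1}$ and $\xi_n^{s,t}=\det(m_{i,j+1}^{s,t})_{i,j=0}^{n-1}$ for $n\ge1$, with $\tau_0^{s,t}=\xi_0^{s,t}=1$. Then for all $n\ge1$ and $s,t\ge0$, $$\tau_{n+1}^{s,t}\tau_{n-1}^{s+1,t}=\tau_n^{s,t}\tau_n^{s+1,t}-\big(\xi_n^{s,t}\big)^2.$$
   Context: Empty determinants equal $1$. *)

theory Defs
  imports "HOL-Analysis.Analysis"
begin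

text \<open>Determinant of the n x n matrix (A i j), i,j = 0..n-1, via the Leibniz formula.
  For n = 0 this is the empty determinant, equal to 1.\<close>
definition detn :: "nat \<Rightarrow> (nat \<Rightarrow> nat \<Rightarrow> real) \<Rightarrow> real" where
  "detn n A = (\<Sum>p | p permutes {0..<n}. of_int (sign p) * (\<Prod>i<n. A i (p i)))"

definition mom :: "nat \<Rightarrow> nat \<Rightarrow> nat \<Rightarrow> nat \<Rightarrow> real" where
  "mom s t i j = (LINT z : {0<..<1} \<times> {0<..<1} | (lborel :: (real \<times> real) measure).
      (fst z ^ (s + i) * snd z ^ (s + j) / (fst z + snd z))
      * ((1 - fst z) / (1 + fst z)) ^ t * ((1 - snd z) / (1 + snd z)) ^ t)"

definition tau :: "nat \<Rightarrow> nat \<Rightarrow> nat \<Rightarrow> real" where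
  "tau n s t = detn n (\<lambda>i j. mom s t i j)"

definition xi :: "nat \<Rightarrow> nat \<Rightarrow> nat \<Rightarrow> real" where
  "xi n s t = detn n (\<lambda>i j. mom s t i (j + 1))"

end

(*
  The moment matrix (m_{i,j}^{s,t})_{i,j=0..n} is symmetric (swap x and y in the integral), and
  m_{i+1,j+1}^{s,t} = m_{i,j}^{s+1,t}. Hence deleting its first row and column gives the matrix of
  tau_n^{s+1,t}, deleting its last row and column gives tau_n^{s,t}, and both corner minors equal
  xi_n^{s,t}, so the identity is the Desnanot-Jacobi identity for this matrix.

  Desnanot-Jacobi for nonsingular A: multiply A by the identity matrix with its first and last
  columns replaced by those of adj A. The product has det A times unit vectors in these columns, so
  its determinant is (det A)^2 times the central minor, while the factor has determinant
  C_00 C_nn - C_n0 C_0n, where C = adj A. The singular case follows by applying this to the matrix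
  X I + A over polynomials, whose determinant is monic, and evaluating at X = 0.
*)
theory Submission
  imports Defs "Jordan_Normal_Form.Determinant" "Jordan_Normal_Form.Char_Poly"
begin

lemma permutes_id_or_transpose:
  assumes p: "p permutes S" and into: "\<And>i. i \<in> S \<Longrightarrow> p i \<in> {i, a, b}"
  shows "p = id \<or> p = Transposition.transpose a b"
proof -
  have p_range: "p i \<in> {i, a, b}" for i
    using into permutes_not_in[OF p] by (cases "i \<in> S") auto
  have p_fix: "p i = i" if "i \<noteq> a" "i \<noteq> b" for i
  proof -
    obtain j where j: "p j = i" using permutes_surj[OF p] by (metis surjD)
    with p_range[of j] that have "j = i" by auto
    with j show ?thesis by simp
  qed
  have inj: "p x = p y \<Longrightarrow> x = y" for x y
    using permutes_inj[OF p] by (auto dest: injD)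
  have "p a \<in> {a, b}" "p b \<in> {a, b}" using p_range[of a] p_range[of b] by auto
  then consider "p a = a" "p b = b" | "p a = b" "p b = a"
    using inj by fastforce
  then show ?thesis
  proof cases
    case 1
    then have "p = id" using p_fix by (intro ext) (metis id_apply)
    then show ?thesis ..
  next
    case 2
    have "p x = Transposition.transpose a b x" for x
      using 2 p_fix[of x] by (cases "x = a \<or> x = b") (auto simp: transpose_def)
    then have "p = Transposition.transpose a b" ..
    then show ?thesis ..
  qed
qed

lemma det_identity_except_two_columns:
  fixes B :: "'a::comm_ring_1 mat"
  assumes B: "B \<in> carrier_mat n n" and ab: "a < n" "b < n" "a \<noteq> b"
    and identity: "\<And>i j. i < n \<Longrightarrow> j < n \<Longrightarrow> j \<noteq> a \<Longrightarrow> j \<noteq> b \<Longrightarrow>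
      B $$ (i, j) = (if i = j then 1 else 0)"
  shows "det B = B $$ (a, a) * B $$ (b, b) - B $$ (b, a) * B $$ (a, b)"
proof -
  let ?T = "Transposition.transpose a b"
  let ?term = "\<lambda>p. signof p * (\<Prod>i = 0..<n. B $$ (i, p i))"
  have T: "?T permutes {0..<n}" using ab by (intro permutes_swap_id) auto
  have vanish: "?term p = 0" if p: "p permutes {0..<n}" and not_T: "p \<noteq> id" "p \<noteq> ?T" for p
  proof -
    obtain i where i: "i < n" "p i \<notin> {i, a, b}"
      using permutes_id_or_transpose[OF p, of a b] not_T by auto
    have "p i < n" using permutes_in_image[OF p] i(1) by simp
    with i identity have "B $$ (i, p i) = 0" by auto
    with i(1) have "(\<Prod>i = 0..<n. B $$ (i, p i)) = 0" by (intro prod_zero) auto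
    then show ?thesis by simp
  qed
  have "det B = sum ?term {id, ?T}"
    unfolding det_def'[OF B]
    using T vanish by (intro sum.mono_neutral_right) (auto simp: finite_permutations permutes_id)
  also have "\<dots> = (\<Prod>i = 0..<n. B $$ (i, i)) - (\<Prod>i = 0..<n. B $$ (i, ?T i))"
  proof -
    have "id \<noteq> ?T" using ab by (metis id_apply transpose_apply_first)
    then show ?thesis using ab by (simp add: sign_swap_id)
  qed
  also have "(\<Prod>i = 0..<n. B $$ (i, i)) = B $$ (a, a) * B $$ (b, b)"
    using ab identity by (subst prod.mono_neutral_right[where S = "{a, b}"]) auto
  also have "(\<Prod>i = 0..<n. B $$ (i, ?T i)) = B $$ (b, a) * B $$ (a, b)"
    using ab identity
    by (subst prod.mono_neutral_right[where S = "{a, b}"]) (auto simp: transpose_def)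
  finally show ?thesis .
qed

lemma det_unit_column:
  fixes A :: "'a::comm_ring_1 mat"
  assumes A: "A \<in> carrier_mat n n" and j: "j < n"
    and col: "\<And>i. i < n \<Longrightarrow> A $$ (i, j) = (if i = j then c else 0)"
  shows "det A = c * det (mat_delete A j j)"
proof -
  have "det A = (\<Sum>i<n. A $$ (i, j) * cofactor A i j)"
    by (rule laplace_expansion_column[OF A j])
  also have "\<dots> = A $$ (j, j) * cofactor A j j"
    using j col by (subst sum.remove[of _ j]) auto
  finally show ?thesis
    using j col by (simp add: cofactor_def flip: mult_2)
qed

lemma desnanot_jacobi_nonsingular:
  fixes A :: "'a::idom mat"
  assumes A: "A \<in> carrier_mat (Suc n) (Suc n)" and n: "0 < n" and nonsingular: "det A \<noteq> 0"
  shows "det A * det (mat_delete (mat_delete A 0 0) (n - 1) (n - 1))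
    = det (mat_delete A 0 0) * det (mat_delete A n n)
      - det (mat_delete A 0 n) * det (mat_delete A n 0)"
proof -
  define C where "C = adj_mat A"
  have C: "C \<in> carrier_mat (Suc n) (Suc n)" and AC: "A * C = det A \<cdot>\<^sub>m 1\<^sub>m (Suc n)"
    using adj_mat[OF A] by (auto simp: C_def)
  define M where "M = mat (Suc n) (Suc n)
    (\<lambda>(i, j). if j = 0 \<or> j = n then C $$ (i, j) else if i = j then 1 else 0)"
  have M: "M \<in> carrier_mat (Suc n) (Suc n)" by (simp add: M_def)
  have AM: "(A * M) $$ (i, j) =
      (if j = 0 \<or> j = n then if i = j then det A else 0 else A $$ (i, j))"
    if ij: "i < Suc n" "j < Suc n" for i j
  proof (cases "j = 0 \<or> j = n")
    case True
    then have "col M j = col C j" using ij C by (intro eq_vecI) (auto simp: M_def)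
    then have "(A * M) $$ (i, j) = (A * C) $$ (i, j)" using ij A C M by simp
    with True ij show ?thesis by (simp add: AC)
  next
    case False
    then have "col M j = unit_vec (Suc n) j" using ij by (intro eq_vecI) (auto simp: M_def)
    then show ?thesis using False ij A M by (simp add: scalar_prod_right_unit)
  qed
  have AM_carrier: "A * M \<in> carrier_mat (Suc n) (Suc n)" using A M by simp
  have "det A * det M = det (A * M)" by (rule det_mult[OF A M, symmetric])
  also have "\<dots> = det A * det (mat_delete (A * M) 0 0)"
    using AM by (intro det_unit_column[OF AM_carrier]) auto
  also have "det (mat_delete (A * M) 0 0)
      = det A * det (mat_delete (mat_delete (A * M) 0 0) (n - 1) (n - 1))"
    using n A M AM
    by (intro det_unit_column[of _ n]) (auto simp: mat_delete_def mat_delete_carrier)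
  also have "mat_delete (mat_delete (A * M) 0 0) (n - 1) (n - 1)
      = mat_delete (mat_delete A 0 0) (n - 1) (n - 1)"
    using A AM_carrier AM by (intro eq_matI) (auto simp: mat_delete_def)
  finally have "det M = det A * det (mat_delete (mat_delete A 0 0) (n - 1) (n - 1))"
    using nonsingular by simp
  moreover have "det M = C $$ (0, 0) * C $$ (n, n) - C $$ (n, 0) * C $$ (0, n)"
  proof -
    have "det M = M $$ (0, 0) * M $$ (n, n) - M $$ (n, 0) * M $$ (0, n)"
      using n by (intro det_identity_except_two_columns[OF M]) (auto simp: M_def)
    then show ?thesis by (simp add: M_def)
  qed
  moreover have "C $$ (n, 0) * C $$ (0, n) = det (mat_delete A 0 n) * det (mat_delete A n 0)"
    using A by (simp add: C_def adj_mat_def cofactor_def algebra_simps flip: power_add mult_2)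
  moreover have "C $$ (0, 0) = det (mat_delete A 0 0)" "C $$ (n, n) = det (mat_delete A n n)"
    using A by (simp_all add: C_def adj_mat_def cofactor_def flip: mult_2)
  ultimately show ?thesis by simp
qed

lemma mat_delete_map_mat: "mat_delete (map_mat f A) i j = map_mat f (mat_delete A i j)"
  by (rule eq_matI) (auto simp: mat_delete_def)

lemma map_mat_poly_0_char_poly_matrix_uminus:
  assumes A: "A \<in> carrier_mat n n"
  shows "map_mat (\<lambda>p. poly p 0) (char_poly_matrix (- A)) = A"
  using A by (intro eq_matI) (auto simp: char_poly_matrix_def)

lemma desnanot_jacobi:
  fixes A :: "'a::idom mat"
  assumes A: "A \<in> carrier_mat (Suc n) (Suc n)" and n: "0 < n"
  shows "det A * det (mat_delete (mat_delete A 0 0) (n - 1) (n - 1))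
    = det (mat_delete A 0 0) * det (mat_delete A n n)
      - det (mat_delete A 0 n) * det (mat_delete A n 0)"
proof -
  have eval_0: "comm_ring_hom (\<lambda>p. poly p (0::'a))" by unfold_locales auto
  define B where "B = char_poly_matrix (- A)"
  have B: "B \<in> carrier_mat (Suc n) (Suc n)" using A by (simp add: B_def)
  have "coeff (det B) (Suc n) = 1"
    using degree_monic_char_poly[of "- A" "Suc n"] A by (simp add: B_def char_poly_def)
  then have "det B \<noteq> 0" by auto
  from desnanot_jacobi_nonsingular[OF B n this]
  have "poly (det B * det (mat_delete (mat_delete B 0 0) (n - 1) (n - 1))) 0
    = poly (det (mat_delete B 0 0) * det (mat_delete B n n)
        - det (mat_delete B 0 n) * det (mat_delete B n 0)) 0"
    by (rule arg_cong)
  moreover have "map_mat (\<lambda>p. poly p 0) B = A"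
    unfolding B_def by (rule map_mat_poly_0_char_poly_matrix_uminus[OF A])
  ultimately show ?thesis
    by (simp only: poly_mult poly_diff comm_ring_hom.hom_det[OF eval_0, symmetric]
        mat_delete_map_mat[symmetric])
qed

lemma detn_eq_det: "detn n A = det (mat n n (\<lambda>(i, j). A i j))"
  unfolding detn_def
  by (subst det_def'[of _ n]) (auto simp: atLeast0LessThan intro!: sum.cong prod.cong)

lemma detn_transpose: "detn n (\<lambda>i j. A j i) = detn n A"
proof -
  have "mat n n (\<lambda>(i, j). A j i) = transpose_mat (mat n n (\<lambda>(i, j). A i j))"
    by (rule eq_matI) auto
  then show ?thesis by (simp add: detn_eq_det det_transpose[of _ n])
qed

lemma detn_desnanot_jacobi:
  assumes n: "0 < n"
  shows "detn (Suc n) A * detn (n - 1) (\<lambda>i j. A (Suc i) (Suc j))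
    = detn n (\<lambda>i j. A (Suc i) (Suc j)) * detn n A
      - detn n (\<lambda>i j. A (Suc i) j) * detn n (\<lambda>i j. A i (Suc j))"
proof -
  define M where "M = mat (Suc n) (Suc n) (\<lambda>(i, j). A i j)"
  have M: "M \<in> carrier_mat (Suc n) (Suc n)" by (simp add: M_def)
  have "det (mat_delete (mat_delete M 0 0) (n - 1) (n - 1))
      = detn (n - 1) (\<lambda>i j. A (Suc i) (Suc j))"
    "det (mat_delete M 0 0) = detn n (\<lambda>i j. A (Suc i) (Suc j))"
    "det (mat_delete M n n) = detn n A"
    "det (mat_delete M 0 n) = detn n (\<lambda>i j. A (Suc i) j)"
    "det (mat_delete M n 0) = detn n (\<lambda>i j. A i (Suc j))"
    unfolding detn_eq_det
    by (auto intro!: arg_cong[where f = det] eq_matI simp: M_def mat_delete_def)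
  with desnanot_jacobi[OF M n] show ?thesis
    by (simp add: M_def detn_eq_det)
qed

(* No integrability is needed: the coordinate swap preserves lborel, so it transports the
   Bochner integral even where that is the junk value 0. *)
lemma mom_swap: "mom s t i j = mom s t j i"
proof -
  define f where "f a b z = indicator ({0<..<1} \<times> {0<..<1}) z *\<^sub>R
      (fst z ^ (s + a) * snd z ^ (s + b) / (fst z + snd z)
        * ((1 - fst z) / (1 + fst z)) ^ t * ((1 - snd z) / (1 + snd z)) ^ t)"
    for a b and z :: "real \<times> real"
  have mom_eq: "mom s t a b = integral\<^sup>L (lborel \<Otimes>\<^sub>M lborel) (f a b)" for a b
    unfolding mom_def set_lebesgue_integral_def f_def lborel_prod by simp
  have "f i j \<in> borel_measurable (lborel \<Otimes>\<^sub>M lborel)"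
    unfolding f_def by measurable
  then have "integral\<^sup>L (lborel \<Otimes>\<^sub>M lborel) (f i j)
      = (\<integral>(x, y). f i j (y, x) \<partial>(lborel \<Otimes>\<^sub>M lborel))"
    by (rule lborel_pair.integral_product_swap[symmetric])
  also have "(\<lambda>(x, y). f i j (y, x)) = f j i"
    by (auto simp: f_def indicator_def add.commute mult.commute mult.left_commute)
  finally show ?thesis by (simp add: mom_eq)
qed

lemma mom_Suc_Suc: "mom s t (Suc i) (Suc j) = mom (Suc s) t i j"
  by (simp add: mom_def)

theorem proposition3p1:
  fixes n s t :: nat
  assumes "n \<ge> 1"
  shows "tau (n + 1) s t * tau (n - 1) (s + 1) t
           = tau n s t * tau n (s + 1) t - (xi n s t)^2"
proof -
  have "detn n (\<lambda>i j. mom s t (Suc i) j) = xi n s t"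
    using detn_transpose[of n "\<lambda>i j. mom s t i (Suc j)"] by (simp add: xi_def mom_swap)
  with detn_desnanot_jacobi[of n "mom s t"] assms show ?thesis
    by (simp add: tau_def xi_def mom_Suc_Suc power2_eq_square)
qed

end
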